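(* For all integers $n, k \geq 1$ with $n \geq k$, $$\sum_{i=k}^{n} \frac{S(n-1,i-1)\, s(i,k)}{i} = \frac{1}{n}\binom{n}{k} B_{n-k}.$$
   Context: For $n \geq 0$, $X^{\underline{n}} := X(X-1)\cdots(X-n+1)$ ($X^{\underline{0}}=1$). The (signed) Stirling numbers of the first kind $s(n,k)$ are defined by $X^{\underline{n}} = \sum_{k=0}^{n} s(n,k) X^k$, and the Stirling numbers of the second kind $S(n,k)$ by $X^n = \sum_{k=0}^{n} S(n,k) X^{\underline{k}}$ (for all $n\ge 0$), with $s(n,k)=S(n,k)=0$ when $n<k$. The Bernoulli numbers $B_n$ are defined by $\frac{t}{e^t-1} = \sum_{n\ge 0} B_n \frac{t^n}{n!}$. *)

theory Defs
  imports "HOL-Combinatorics.Stirling" "HOL-Computational_Algebra.Formal_Power_Series"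
begin

text \<open>Signed Stirling numbers of the first kind s(n,k), via the library's unsigned ones:
  X falling n = sum_k s(n,k) X^k.\<close>
definition stirling1s :: "nat \<Rightarrow> nat \<Rightarrow> int" where
  "stirling1s n k = (-1) ^ (n - k) * int (stirling n k)"

abbreviation stirling2 :: "nat \<Rightarrow> nat \<Rightarrow> nat" where
  "stirling2 n k \<equiv> Stirling n k"

definition bernoulli_num :: "nat \<Rightarrow> rat" where
  "bernoulli_num n = fact n * fps_nth (fps_X / (fps_exp 1 - 1)) n"

end

theory Submission
  imports Defs "HOL-Computational_Algebra.Polynomial"
begin

text \<open>
  Put F(x) = \<Sum>_{i=1..n} S(n-1,i-1)/i * [x]_i, where [x]_i is the falling factorial. Since
  [x+1]_{i+1} - [x]_{i+1} = (i+1) [x]_i and x^m = \<Sum>_i S(m,i) [x]_i, F is a discrete antiderivative: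
  F(x+1) - F(x) = x^(n-1). Expanding [x]_i = \<Sum>_k s(i,k) x^k shows that the left-hand side of the
  theorem is the coefficient a_k of x^k in F. Comparing coefficients in the difference equation yields
  the triangular system \<Sum>_{k>j} a_k C(k,j) = [j = n-1] (j < n), which determines a_1, ..., a_n;
  by the recurrence \<Sum>_{m<N} C(N,m) B_m = [N = 1] the numbers C(n,k) B_{n-k} / n solve it as well.
\<close>

definition falling_factorial :: "'a::comm_ring_1 \<Rightarrow> nat \<Rightarrow> 'a" where
  "falling_factorial x i = (\<Prod>l<i. x - of_nat l)"

lemma falling_factorial_0 [simp]: "falling_factorial x 0 = 1"
  by (simp add: falling_factorial_def)

lemma falling_factorial_Suc: "falling_factorial x (Suc i) = falling_factorial x i * (x - of_nat i)"
  by (simp add: falling_factorial_def)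

lemma falling_factorial_Suc_plus_1:
  "falling_factorial (x + 1) (Suc i) = (x + 1) * falling_factorial x i"
  unfolding falling_factorial_def by (subst prod.lessThan_Suc_shift) (simp add: algebra_simps)

lemma falling_factorial_forward_difference:
  "falling_factorial (x + 1) (Suc i) - falling_factorial x (Suc i)
     = of_nat (Suc i) * falling_factorial x i"
  by (simp only: falling_factorial_Suc_plus_1 falling_factorial_Suc[of x]) (simp add: algebra_simps)

lemma falling_factorial_eq_pochhammer: "falling_factorial x i = (-1) ^ i * pochhammer (-x) i"
proof -
  have "falling_factorial x i = (\<Prod>l<i. (-1) * (of_nat l - x))"
    by (simp add: falling_factorial_def)
  also have "\<dots> = (-1) ^ i * (\<Prod>l<i. of_nat l - x)"
    by (simp only: prod.distrib prod_constant card_lessThan)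
  finally show ?thesis
    by (simp add: pochhammer_prod atLeast0LessThan)
qed

lemma falling_factorial_eq_sum_stirling1s:
  "falling_factorial x i = (\<Sum>k\<le>i. of_int (stirling1s i k) * x ^ k)"
proof -
  have "falling_factorial x i = (\<Sum>k\<le>i. (-1) ^ i * (of_nat (stirling i k) * (-x) ^ k))"
    unfolding falling_factorial_eq_pochhammer stirling_pochhammer[symmetric] sum_distrib_left ..
  also have "\<dots> = (\<Sum>k\<le>i. of_int (stirling1s i k) * x ^ k)"
  proof (rule sum.cong [OF refl])
    fix k assume "k \<in> {..i}"
    then have "(-1 :: 'a) ^ i = (-1) ^ (i - k) * (-1) ^ k"
      by (simp flip: power_add)
    moreover have "(-1 :: 'a) ^ k * (-x) ^ k = x ^ k"
      by (simp flip: power_mult_distrib)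
    ultimately have "(-1 :: 'a) ^ i * (-x) ^ k = (-1) ^ (i - k) * x ^ k"
      by (simp only: mult.assoc)
    then show "(-1) ^ i * (of_nat (stirling i k) * (-x) ^ k) = of_int (stirling1s i k) * x ^ k"
      by (simp add: stirling1s_def algebra_simps)
  qed
  finally show ?thesis .
qed

lemma power_eq_sum_Stirling_falling_factorial:
  "x ^ m = (\<Sum>i\<le>m. of_nat (Stirling m i) * falling_factorial x i)"
proof (induction m)
  case 0
  show ?case by simp
next
  case (Suc m)
  let ?S = "\<lambda>i. of_nat (Stirling m i)" and ?f = "falling_factorial x"
  have shift: "(\<Sum>i\<le>m. of_nat (Suc i) * ?S (Suc i) * ?f (Suc i)) = (\<Sum>i\<le>m. of_nat i * ?S i * ?f i)"
  proof -
    have "(\<Sum>i\<le>Suc m. of_nat i * ?S i * ?f i) = (\<Sum>i\<le>m. of_nat (Suc i) * ?S (Suc i) * ?f (Suc i))"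
      by (subst sum.atMost_Suc_shift) simp
    then show ?thesis by simp
  qed
  have "(\<Sum>i\<le>Suc m. of_nat (Stirling (Suc m) i) * ?f i)
      = (\<Sum>i\<le>m. of_nat (Stirling (Suc m) (Suc i)) * ?f (Suc i))"
    by (subst sum.atMost_Suc_shift) simp
  also have "\<dots> = (\<Sum>i\<le>m. ?S i * ?f (Suc i)) + (\<Sum>i\<le>m. of_nat (Suc i) * ?S (Suc i) * ?f (Suc i))"
    by (simp add: sum.distrib algebra_simps)
  also have "\<dots> = (\<Sum>i\<le>m. ?S i * (?f (Suc i) + of_nat i * ?f i))"
    unfolding shift by (simp add: sum.distrib algebra_simps)
  also have "\<dots> = x * (\<Sum>i\<le>m. ?S i * ?f i)"
    by (simp add: sum_distrib_left falling_factorial_Suc algebra_simps)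
  finally show ?case by (simp add: Suc.IH)
qed

lemma bernoulli_num_recurrence:
  assumes "N \<ge> 1"
  shows "(\<Sum>m<N. of_nat (N choose m) * bernoulli_num m) = (if N = 1 then 1 else 0)"
proof -
  define E where "E = fps_exp (1 :: rat) - 1"
  define Q where "Q = fps_X / E"
  have E_nth: "fps_nth E j = (if j = 0 then 0 else 1 / fact j)" for j
    by (simp add: E_def)
  have "E \<noteq> 0" and "subdegree E \<le> 1"
    using E_nth[of 1] by (auto intro: subdegree_leI)
  then have "E dvd fps_X"
    by (simp add: fps_dvd_iff)
  then have QE: "Q * E = fps_X"
    by (simp add: Q_def)
  have "(\<Sum>m<N. of_nat (N choose m) * bernoulli_num m) = fact N * (\<Sum>m<N. fps_nth Q m * fps_nth E (N - m))"
    unfolding sum_distrib_left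
  proof (rule sum.cong [OF refl])
    fix m assume "m \<in> {..<N}"
    then show "of_nat (N choose m) * bernoulli_num m = fact N * (fps_nth Q m * fps_nth E (N - m))"
      by (simp add: binomial_fact bernoulli_num_def Q_def E_def E_nth)
  qed
  also have "(\<Sum>m<N. fps_nth Q m * fps_nth E (N - m)) = fps_nth (Q * E) N"
    by (simp add: fps_mult_nth atLeast0AtMost lessThan_Suc_atMost[symmetric] E_nth)
  finally show ?thesis
    using assms by (simp add: QE)
qed

lemma bernoulli_num_binomial_system:
  assumes "j < n"
  shows "(\<Sum>k=Suc j..n. (1 / of_nat n * of_nat (n choose k) * bernoulli_num (n - k)) * of_nat (k choose j))
           = (if j = n - 1 then 1 else 0)"
proof -
  have "(\<Sum>k=Suc j..n. (1 / of_nat n * of_nat (n choose k) * bernoulli_num (n - k)) * of_nat (k choose j))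
      = 1 / of_nat n * of_nat (n choose j) * (\<Sum>k=Suc j..n. of_nat ((n - j) choose (k - j)) * bernoulli_num (n - k))"
    unfolding sum_distrib_left
  proof (rule sum.cong [OF refl])
    fix k assume "k \<in> {Suc j..n}"
    then have "(n choose k) * (k choose j) = (n choose j) * ((n - j) choose (k - j))"
      by (intro choose_mult) auto
    then have "(of_nat (n choose k) :: rat) * of_nat (k choose j) = of_nat (n choose j) * of_nat ((n - j) choose (k - j))"
      by (metis of_nat_mult)
    then show "(1 / of_nat n * of_nat (n choose k) * bernoulli_num (n - k)) * of_nat (k choose j)
      = 1 / of_nat n * of_nat (n choose j) * (of_nat ((n - j) choose (k - j)) * bernoulli_num (n - k))"
      by (simp add: algebra_simps)
  qed
  also have "(\<Sum>k=Suc j..n. of_nat ((n - j) choose (k - j)) * bernoulli_num (n - k))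
      = (\<Sum>m<n - j. of_nat ((n - j) choose m) * bernoulli_num m)"
  proof (rule sum.reindex_bij_witness [of _ "\<lambda>m. n - m" "\<lambda>k. n - k"])
    fix k assume "k \<in> {Suc j..n}"
    then show "of_nat ((n - j) choose (n - k)) * bernoulli_num (n - k)
        = of_nat ((n - j) choose (k - j)) * bernoulli_num (n - k)"
      by (subst binomial_symmetric) auto
  qed auto
  also have "\<dots> = (if n - j = 1 then 1 else 0)"
    using assms by (intro bernoulli_num_recurrence) simp
  finally show ?thesis
    using assms binomial_symmetric[of 1 n] by auto
qed

lemma sum_powers_eq_imp_coeff_eq:
  fixes c d :: "nat \<Rightarrow> 'a::{idom,ring_char_0}"
  assumes "\<And>x. (\<Sum>i\<le>n. c i * x ^ i) = (\<Sum>i\<le>n. d i * x ^ i)" and "j \<le> n"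
  shows "c j = d j"
proof -
  have "poly (\<Sum>i\<le>n. monom (c i) i) = poly (\<Sum>i\<le>n. monom (d i) i)"
    using assms(1) by (simp add: fun_eq_iff poly_sum poly_monom)
  then have "(\<Sum>i\<le>n. monom (c i) i) = (\<Sum>i\<le>n. monom (d i) i)"
    by (simp only: poly_eq_poly_eq_iff)
  then show ?thesis
    using coeff_sum_monom [OF assms(2)] by metis
qed

lemma forward_difference_coeff:
  fixes c d :: "nat \<Rightarrow> 'a::{idom,ring_char_0}"
  assumes "\<And>x. (\<Sum>k\<le>n. c k * (x + 1) ^ k) - (\<Sum>k\<le>n. c k * x ^ k) = (\<Sum>j\<le>n. d j * x ^ j)"
    and "j \<le> n"
  shows "(\<Sum>k=Suc j..n. c k * of_nat (k choose j)) = d j"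
proof -
  define e where "e i = (\<Sum>k=Suc i..n. c k * of_nat (k choose i))" for i
  have shifted_power: "(x + 1) ^ k = (\<Sum>j\<le>n. of_nat (k choose j) * x ^ j)" if "k \<le> n" for x :: 'a and k
  proof -
    have "(x + 1) ^ k = (\<Sum>j\<le>k. of_nat (k choose j) * x ^ j)"
      by (simp add: binomial_ring)
    also have "\<dots> = (\<Sum>j\<le>n. of_nat (k choose j) * x ^ j)"
      using that by (intro sum.mono_neutral_left) auto
    finally show ?thesis .
  qed
  have split: "(\<Sum>k\<le>n. c k * of_nat (k choose i)) = c i + e i" if "i \<le> n" for i
  proof -
    have "(\<Sum>k\<le>n. c k * of_nat (k choose i)) = (\<Sum>k=i..n. c k * of_nat (k choose i))"
      by (rule sum.mono_neutral_right) auto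
    also have "\<dots> = c i + e i"
      using that by (simp add: e_def sum.atLeast_Suc_atMost)
    finally show ?thesis .
  qed
  have "(\<Sum>i\<le>n. e i * x ^ i) = (\<Sum>i\<le>n. d i * x ^ i)" for x :: 'a
  proof -
    have "(\<Sum>k\<le>n. c k * (x + 1) ^ k) = (\<Sum>k\<le>n. \<Sum>i\<le>n. c k * of_nat (k choose i) * x ^ i)"
      by (simp add: shifted_power sum_distrib_left mult.assoc)
    also have "\<dots> = (\<Sum>i\<le>n. (\<Sum>k\<le>n. c k * of_nat (k choose i)) * x ^ i)"
      by (subst sum.swap) (simp add: sum_distrib_right)
    also have "\<dots> = (\<Sum>i\<le>n. e i * x ^ i) + (\<Sum>k\<le>n. c k * x ^ k)"
      by (simp add: split algebra_simps sum.distrib)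
    finally show ?thesis
      using assms(1) [of x] by simp
  qed
  then show ?thesis
    unfolding e_def using assms(2) by (rule sum_powers_eq_imp_coeff_eq)
qed

lemma binomial_triangular_system_unique:
  fixes a b :: "nat \<Rightarrow> 'a::{idom,ring_char_0}"
  assumes system: "\<And>j. j < n \<Longrightarrow> (\<Sum>k=Suc j..n. a k * of_nat (k choose j))
                                    = (\<Sum>k=Suc j..n. b k * of_nat (k choose j))"
    and "1 \<le> k" "k \<le> n"
  shows "a k = b k"
  using assms(2,3)
proof (induction "n - k" arbitrary: k rule: less_induct)
  case less
  have above: "a k' = b k'" if "k' \<in> {Suc k..n}" for k'
    using less that by auto
  have "(\<Sum>k'=k..n. a k' * of_nat (k' choose (k - 1))) = (\<Sum>k'=k..n. b k' * of_nat (k' choose (k - 1)))"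
    using system [of "k - 1"] less.prems by simp
  then have "a k * of_nat (k choose (k - 1)) + (\<Sum>k'=Suc k..n. a k' * of_nat (k' choose (k - 1)))
      = b k * of_nat (k choose (k - 1)) + (\<Sum>k'=Suc k..n. b k' * of_nat (k' choose (k - 1)))"
    using less.prems by (simp add: sum.atLeast_Suc_atMost)
  moreover have "(\<Sum>k'=Suc k..n. a k' * of_nat (k' choose (k - 1)))
      = (\<Sum>k'=Suc k..n. b k' * of_nat (k' choose (k - 1)))"
    using above by (intro sum.cong) auto
  moreover have "k choose (k - 1) \<noteq> 0"
    using less.prems by simp
  ultimately show ?case
    by simp
qed

definition power_antidifference :: "nat \<Rightarrow> 'a::field_char_0 \<Rightarrow> 'a" where
  "power_antidifference n x =
     (\<Sum>i=1..n. of_nat (Stirling (n - 1) (i - 1)) / of_nat i * falling_factorial x i)"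

definition power_antidifference_coeff :: "nat \<Rightarrow> nat \<Rightarrow> 'a::field_char_0" where
  "power_antidifference_coeff n k =
     (\<Sum>i=1..n. of_nat (Stirling (n - 1) (i - 1)) * of_int (stirling1s i k) / of_nat i)"

lemma power_antidifference_forward_difference:
  assumes "n \<ge> 1"
  shows "power_antidifference n (x + 1) - power_antidifference n x = x ^ (n - 1)"
proof -
  obtain m where n: "n = Suc m"
    using assms by (cases n) auto
  have "power_antidifference n (x + 1) - power_antidifference n x
      = (\<Sum>i=Suc 0..Suc m. of_nat (Stirling m (i - 1)) / of_nat i
           * (falling_factorial (x + 1) i - falling_factorial x i))"
    by (simp add: power_antidifference_def n sum_subtractf right_diff_distrib)
  also have "\<dots> = (\<Sum>i\<le>m. of_nat (Stirling m i) / of_nat (Suc i)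
           * (falling_factorial (x + 1) (Suc i) - falling_factorial x (Suc i)))"
    by (simp only: sum.shift_bounds_cl_Suc_ivl atLeast0AtMost diff_Suc_1)
  also have "\<dots> = (\<Sum>i\<le>m. of_nat (Stirling m i) * falling_factorial x i)"
    by (simp only: falling_factorial_forward_difference) (simp del: of_nat_Suc)
  also have "\<dots> = x ^ m"
    by (simp add: power_eq_sum_Stirling_falling_factorial)
  finally show ?thesis
    by (simp add: n)
qed

lemma power_antidifference_eq_sum_powers:
  "power_antidifference n x = (\<Sum>k\<le>n. power_antidifference_coeff n k * x ^ k)"
proof -
  have "power_antidifference n x = (\<Sum>i=1..n. \<Sum>k\<le>n.
          of_nat (Stirling (n - 1) (i - 1)) * of_int (stirling1s i k) / of_nat i * x ^ k)"
    unfolding power_antidifference_def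
  proof (rule sum.cong [OF refl])
    fix i assume "i \<in> {1..n}"
    have "falling_factorial x i = (\<Sum>k\<le>i. of_int (stirling1s i k) * x ^ k)"
      by (rule falling_factorial_eq_sum_stirling1s)
    also have "\<dots> = (\<Sum>k\<le>n. of_int (stirling1s i k) * x ^ k)"
      using \<open>i \<in> {1..n}\<close> by (intro sum.mono_neutral_left) (auto simp: stirling1s_def)
    finally show "of_nat (Stirling (n - 1) (i - 1)) / of_nat i * falling_factorial x i = (\<Sum>k\<le>n.
          of_nat (Stirling (n - 1) (i - 1)) * of_int (stirling1s i k) / of_nat i * x ^ k)"
      by (simp add: sum_distrib_left sum_divide_distrib algebra_simps)
  qed
  also have "\<dots> = (\<Sum>k\<le>n. power_antidifference_coeff n k * x ^ k)"
    by (subst sum.swap) (simp add: power_antidifference_coeff_def sum_distrib_right)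
  finally show ?thesis .
qed

lemma power_antidifference_coeff_binomial_system:
  assumes "n \<ge> 1" and "j \<le> n"
  shows "(\<Sum>k=Suc j..n. power_antidifference_coeff n k * of_nat (k choose j))
           = (if j = n - 1 then 1 else (0 :: 'a::field_char_0))"
proof (rule forward_difference_coeff [OF _ assms(2)])
  fix x :: 'a
  have "(\<Sum>k\<le>n. power_antidifference_coeff n k * (x + 1) ^ k) - (\<Sum>k\<le>n. power_antidifference_coeff n k * x ^ k)
      = x ^ (n - 1)"
    using power_antidifference_forward_difference [OF assms(1)]
    by (simp add: power_antidifference_eq_sum_powers)
  also have "\<dots> = (\<Sum>j\<le>n. if j = n - 1 then x ^ j else 0)"
    by (simp add: sum.delta)
  also have "\<dots> = (\<Sum>j\<le>n. (if j = n - 1 then 1 else 0) * x ^ j)"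
    by (rule sum.cong) auto
  finally show "(\<Sum>k\<le>n. power_antidifference_coeff n k * (x + 1) ^ k) - (\<Sum>k\<le>n. power_antidifference_coeff n k * x ^ k)
      = (\<Sum>j\<le>n. (if j = n - 1 then 1 else 0) * x ^ j)" .
qed

theorem corollary2:
  fixes n k :: nat
  assumes "k \<ge> 1" and "n \<ge> k"
  shows "(\<Sum>i=k..n. of_nat (stirling2 (n - 1) (i - 1)) * of_int (stirling1s i k) / of_nat i)
           = (1 / of_nat n) * of_nat (n choose k) * bernoulli_num (n - k)"
proof -
  have "(\<Sum>i=k..n. of_nat (stirling2 (n - 1) (i - 1)) * of_int (stirling1s i k) / of_nat i)
      = power_antidifference_coeff n k"
    unfolding power_antidifference_coeff_def using assms
    by (intro sum.mono_neutral_left) (auto simp: stirling1s_def)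
  also have "\<dots> = (1 / of_nat n) * of_nat (n choose k) * bernoulli_num (n - k)"
  proof (rule binomial_triangular_system_unique [OF _ assms])
    fix j assume "j < n"
    then have "1 \<le> n" and "j \<le> n"
      by simp_all
    then show "(\<Sum>k=Suc j..n. power_antidifference_coeff n k * of_nat (k choose j))
        = (\<Sum>k=Suc j..n. (1 / of_nat n * of_nat (n choose k) * bernoulli_num (n - k)) * of_nat (k choose j))"
      by (simp only: power_antidifference_coeff_binomial_system bernoulli_num_binomial_system [OF \<open>j < n\<close>])
  qed
  finally show ?thesis .
qed

end
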